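(* Let $V(r)=r^{-6}-2r^{-3}$. There exists $A_3>0$ such that for every $A>A_3$, every minimizer $y_A\ge1$ of $y\mapsto E_V(0,y,A)$ on $[1,\infty)$ satisfies $$X_1(A)^{1/3}\le y_A\le X_2(A)^{1/3},$$ where $$X_{1,2}(A)=\frac{2\zeta_{\mathbb Z^2}(6)A^3\mp\sqrt{4\zeta_{\mathbb Z^2}(6)^2A^6-32A^4+8\zeta_{\mathbb Z^2}(12)A^2}}{4}.$$ In particular, $\lim_{A\to\infty}y_A=+\infty$, and there exists $C>0$ such that $y_A\le CA$ for all $A>A_3$.
   Context: For $A>0$, $x\in\mathbb R$, $y>0$, $E_{f}(x,y,A)=\sum_{m,n} f\left(A\left[\frac1y(m+xn)^2+yn^2\right]\right)$, where $\sum_{m,n}$ denotes summation over all $(m,n)\in\mathbb Z^2\setminus\{(0,0)\}$; $E_V(0,y,A)$, $y\ge1$, is the energy of the rectangular lattice $\mathbb Z(\sqrt{A/y},0)\oplus\mathbb Z(0,\sqrt{Ay})$. $\zeta_{\mathbb Z^2}(s)=\sum_{m,n}(m^2+n^2)^{-s/2}$. *)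

theory Defs
  imports "HOL-Analysis.Analysis"
begin

definition E_lat :: "(real \<Rightarrow> real) \<Rightarrow> real \<Rightarrow> real \<Rightarrow> real \<Rightarrow> real" where
  "E_lat f x y A = infsum (\<lambda>(m::int, n::int).
       f (A * ((1 / y) * (real_of_int m + x * real_of_int n)^2 + y * (real_of_int n)^2)))
     (UNIV - {(0, 0)})"

definition zeta_Z2 :: "real \<Rightarrow> real" where
  "zeta_Z2 s = infsum (\<lambda>(m::int, n::int).
       (real_of_int m ^ 2 + real_of_int n ^ 2) powr (- s / 2)) (UNIV - {(0, 0)})"

definition LJ_V :: "real \<Rightarrow> real" where
  "LJ_V r = r powr (-6) - 2 * r powr (-3)"

definition is_minimizer_y :: "real \<Rightarrow> real \<Rightarrow> bool" where
  "is_minimizer_y A yA \<longleftrightarrow> yA \<ge> 1 \<and> (\<forall>y\<ge>1. E_lat LJ_V 0 yA A \<le> E_lat LJ_V 0 y A)"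

definition X1 :: "real \<Rightarrow> real" where
  "X1 A = (2 * zeta_Z2 6 * A^3 - sqrt (4 * (zeta_Z2 6)^2 * A^6 - 32 * A^4 + 8 * zeta_Z2 12 * A^2)) / 4"

definition X2 :: "real \<Rightarrow> real" where
  "X2 A = (2 * zeta_Z2 6 * A^3 + sqrt (4 * (zeta_Z2 6)^2 * A^6 - 32 * A^4 + 8 * zeta_Z2 12 * A^2)) / 4"

end

theory Submission
  imports Defs
begin

text \<open>
  Put \<open>q(m,n) = m\<^sup>2 + n\<^sup>2\<close>. For \<open>y \<ge> 1\<close> the distances satisfy \<open>A (m\<^sup>2/y + y n\<^sup>2) \<ge> (A/y) q(m,n)\<close>,
  so each Lennard-Jones term is at least \<open>-2 (y/A)\<^sup>3 / q\<^sup>3\<close>; keeping in addition the repulsive part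
  of the two shortest vectors \<open>(\<plusminus>1,0)\<close> gives
  \<open>E\<^sub>V(0,y,A) \<ge> 2 (y/A)\<^sup>6 - 2 (y/A)\<^sup>3 \<zeta>(6)\<close>.
  At \<open>y = A\<close> every distance \<open>m\<^sup>2 + A\<^sup>2 n\<^sup>2\<close> is at least 1, where \<open>V \<le> 0\<close>, and the two vectors \<open>(\<plusminus>1,0)\<close>
  contribute \<open>V(1) = -1\<close> each, so \<open>E\<^sub>V(0,A,A) \<le> -2\<close>.
  Comparing a minimiser with \<open>y = A\<close> gives for \<open>X = y\<^sub>A\<^sup>3\<close> the quadratic inequality
  \<open>X\<^sup>2 - \<zeta>(6) A\<^sup>3 X + A\<^sup>6 \<le> 0\<close>. Its roots lie between \<open>X\<^sub>1(A)\<close> and \<open>X\<^sub>2(A)\<close> as soon as \<open>A \<ge> 2\<close>,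
  and it directly yields \<open>A\<^sup>3 \<le> \<zeta>(6) X \<le> \<zeta>(6)\<^sup>2 A\<^sup>3\<close>, hence \<open>y\<^sub>A\<close> grows linearly in \<open>A\<close>.
  Convergence of \<open>\<zeta>(6)\<close> follows by comparison with \<open>\<Sum> 1/((1+m\<^sup>2)(1+n\<^sup>2))\<close>.
\<close>

definition lattice_sq_norm :: "int \<times> int \<Rightarrow> real" where
  "lattice_sq_norm = (\<lambda>(m, n). of_int m ^ 2 + of_int n ^ 2)"

lemma lattice_sq_norm_ge_1:
  assumes "z \<noteq> (0, 0)"
  shows "1 \<le> lattice_sq_norm z"
proof -
  obtain m n where z: "z = (m, n)" by (cases z)
  have "1 \<le> m ^ 2 + n ^ 2"
    using assms z
    by (cases "m = 0") (auto simp: int_one_le_iff_zero_less add_pos_nonneg add_nonneg_pos)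
  then have "real_of_int 1 \<le> of_int (m ^ 2 + n ^ 2)"
    by (simp only: of_int_le_iff)
  then show ?thesis by (simp add: z lattice_sq_norm_def)
qed

lemma sum_inverse_one_plus_square_interval:
  "(\<Sum>m\<in>{-int N..int N}. 1 / (1 + of_int m ^ 2)) \<le> 6 - 4 / (real N + 1)"
proof (induction N)
  case (Suc N)
  have "{-int (Suc N)..int (Suc N)} = insert (int N + 1) (insert (-(int N + 1)) {-int N..int N})"
    by auto
  then have "(\<Sum>m\<in>{-int (Suc N)..int (Suc N)}. 1 / (1 + of_int m ^ 2)) =
      2 / (1 + (real N + 1) ^ 2) + (\<Sum>m\<in>{-int N..int N}. 1 / (1 + of_int m ^ 2 :: real))"
    by (simp add: power2_eq_square algebra_simps)
  also have "\<dots> \<le> (4 / (real N + 1) - 4 / (real N + 2)) + (6 - 4 / (real N + 1))"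
  proof (rule add_mono[OF _ Suc.IH])
    have "2 * ((real N + 1) * (real N + 2)) \<le> 4 * (1 + (real N + 1) ^ 2)"
      by (simp add: power2_eq_square algebra_simps)
    then have "2 / (1 + (real N + 1) ^ 2) \<le> 4 / ((real N + 1) * (real N + 2))"
      by (simp add: divide_simps add_pos_nonneg)
    also have "\<dots> = 4 / (real N + 1) - 4 / (real N + 2)"
      by (simp add: field_simps)
    finally show "2 / (1 + (real N + 1) ^ 2) \<le> 4 / (real N + 1) - 4 / (real N + 2)" .
  qed
  also have "\<dots> = 6 - 4 / (real (Suc N) + 1)"
    by (simp add: add.commute)
  finally show ?case .
qed simp

lemma summable_on_inverse_one_plus_square:
  "(\<lambda>m::int. 1 / (1 + of_int m ^ 2 :: real)) summable_on UNIV"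
proof (rule nonneg_bdd_above_summable_on)
  show "bdd_above (sum (\<lambda>m::int. 1 / (1 + of_int m ^ 2 :: real)) ` {F. F \<subseteq> UNIV \<and> finite F})"
  proof (rule bdd_aboveI2)
    fix F :: "int set" assume "F \<in> {F. F \<subseteq> UNIV \<and> finite F}"
    then have "bdd_above (abs ` F)" by simp
    then obtain b where "\<forall>m\<in>F. \<bar>m\<bar> \<le> b"
      by (auto simp: bdd_above_def)
    then have "F \<subseteq> {-int (nat b)..int (nat b)}"
      by force
    then have "(\<Sum>m\<in>F. 1 / (1 + of_int m ^ 2)) \<le>
        (\<Sum>m\<in>{-int (nat b)..int (nat b)}. 1 / (1 + of_int m ^ 2 :: real))"
      by (intro sum_mono2) auto
    also have "\<dots> \<le> 6"
      by (rule order_trans[OF sum_inverse_one_plus_square_interval]) simp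
    finally show "(\<Sum>m\<in>F. 1 / (1 + of_int m ^ 2)) \<le> (6::real)" .
  qed
qed auto

lemma inverse_lattice_sq_norm_power_le:
  assumes "(m, n) \<noteq> (0, 0)" and "2 \<le> k"
  shows "1 / lattice_sq_norm (m, n) ^ k \<le> 3 * (1 / (1 + of_int m ^ 2) * (1 / (1 + of_int n ^ 2)))"
proof -
  define a :: real where "a = of_int m ^ 2"
  define b :: real where "b = of_int n ^ 2"
  have ab: "0 \<le> a" "0 \<le> b" "1 \<le> a + b"
    using lattice_sq_norm_ge_1[OF assms(1)] by (auto simp: a_def b_def lattice_sq_norm_def)
  have "a * b \<le> (a + b) ^ 2"
    using ab by (simp add: power2_eq_square algebra_simps)
  moreover have "a + b \<le> (a + b) ^ 2"
    using ab(3) by (simp add: power2_eq_square)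
  moreover have "1 \<le> (a + b) ^ 2"
    using ab(3) by (simp add: one_le_power)
  moreover have "(1 + a) * (1 + b) = 1 + (a + b) + a * b"
    by (simp add: algebra_simps)
  ultimately have "(1 + a) * (1 + b) \<le> 3 * (a + b) ^ 2"
    by linarith
  also have "\<dots> \<le> 3 * (a + b) ^ k"
    using ab assms(2) by (simp add: power_increasing)
  finally have "(1 + a) * (1 + b) \<le> 3 * (a + b) ^ k" .
  then have "3 / (3 * (a + b) ^ k) \<le> 3 / ((1 + a) * (1 + b))"
    using ab by (intro divide_left_mono) auto
  then show ?thesis
    by (simp add: a_def b_def lattice_sq_norm_def)
qed

lemma summable_on_inverse_lattice_sq_norm_power:
  assumes "2 \<le> k"
  shows "(\<lambda>z. 1 / lattice_sq_norm z ^ k) summable_on UNIV - {(0, 0)}"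
proof -
  define g :: "int \<Rightarrow> real" where "g m = 1 / (1 + of_int m ^ 2)" for m
  have g_nonneg: "0 \<le> g m" for m
    by (simp add: g_def)
  have g: "g summable_on UNIV"
    unfolding g_def by (rule summable_on_inverse_one_plus_square)
  have "(\<lambda>(m, n). g m * g n) summable_on Sigma UNIV (\<lambda>_. UNIV)"
    using g by (intro summable_on_SigmaI[where g = "\<lambda>m. g m * infsum g UNIV"])
      (auto intro!: has_sum_cmult_right summable_on_cmult_left mult_nonneg_nonneg g_nonneg)
  then have "(\<lambda>z. 3 * (case z of (m, n) \<Rightarrow> g m * g n)) summable_on UNIV"
    by (intro summable_on_cmult_right) simp
  then have "(\<lambda>z. 3 * (case z of (m, n) \<Rightarrow> g m * g n)) summable_on UNIV - {(0, 0)}"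
    by (rule summable_on_subset_banach) simp
  then show ?thesis
  proof (rule summable_on_comparison_test)
    show "1 / lattice_sq_norm z ^ k \<le> 3 * (case z of (m, n) \<Rightarrow> g m * g n)"
      if "z \<in> UNIV - {(0, 0)}" for z
      using that assms inverse_lattice_sq_norm_power_le[of "fst z" "snd z" k]
      by (simp add: g_def case_prod_unfold)
    show "0 \<le> 1 / lattice_sq_norm z ^ k" if "z \<in> UNIV - {(0, 0)}" for z
    proof -
      have "0 \<le> lattice_sq_norm z"
        using that lattice_sq_norm_ge_1[of z] by simp
      then show ?thesis by simp
    qed
  qed
qed

lemma has_sum_zeta_Z2_even:
  assumes "2 \<le> k"
  shows "((\<lambda>z. 1 / lattice_sq_norm z ^ k) has_sum zeta_Z2 (2 * real k)) (UNIV - {(0, 0)})"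
proof -
  have "zeta_Z2 (2 * real k) = infsum (\<lambda>z. 1 / lattice_sq_norm z ^ k) (UNIV - {(0, 0)})"
    unfolding zeta_Z2_def
  proof (rule infsum_cong)
    fix z :: "int \<times> int" assume "z \<in> UNIV - {(0, 0)}"
    then have "0 < lattice_sq_norm z"
      using lattice_sq_norm_ge_1[of z] by simp
    then have "lattice_sq_norm z powr (- real k) = 1 / lattice_sq_norm z ^ k"
      by (simp only: powr_minus_divide powr_realpow)
    then show "(case z of (m, n) \<Rightarrow> (of_int m ^ 2 + of_int n ^ 2) powr (- (2 * real k) / 2)) =
        1 / lattice_sq_norm z ^ k"
      by (simp add: lattice_sq_norm_def case_prod_unfold)
  qed
  then show ?thesis
    using summable_on_inverse_lattice_sq_norm_power[OF assms] by simp
qed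

lemma zeta_Z2_nonneg: "0 \<le> zeta_Z2 s"
  unfolding zeta_Z2_def by (rule infsum_nonneg) auto

lemma has_sum_zeta_Z2_6:
  "((\<lambda>z. 1 / lattice_sq_norm z ^ 3) has_sum zeta_Z2 6) (UNIV - {(0, 0)})"
  using has_sum_zeta_Z2_even[of 3] by simp

lemma zeta_Z2_6_ge_1: "1 \<le> zeta_Z2 6"
proof -
  have "((\<lambda>z. 1 / lattice_sq_norm z ^ 3) has_sum 1 / lattice_sq_norm (1, 0) ^ 3) {(1, 0)}"
    using has_sum_finite[of "{(1, 0)}" "\<lambda>z. 1 / lattice_sq_norm z ^ 3"] by simp
  then have "((\<lambda>z. 1 / lattice_sq_norm z ^ 3) has_sum 1) {(1, 0)}"
    by (simp add: lattice_sq_norm_def)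
  then show ?thesis
    using has_sum_zeta_Z2_6
    by (rule has_sum_mono2) (simp_all add: lattice_sq_norm_def case_prod_unfold)
qed

lemma LJ_V_eq: "0 < r \<Longrightarrow> LJ_V r = 1 / r ^ 6 - 2 / r ^ 3"
  using powr_realpow[of r 6] powr_realpow[of r 3]
  by (simp add: LJ_V_def powr_minus_divide)

lemma LJ_V_nonpos:
  assumes "1 \<le> r"
  shows "LJ_V r \<le> 0"
proof -
  have "r ^ 3 \<le> r ^ 6"
    by (rule power_increasing) (use assms in auto)
  then have "r ^ 3 \<le> 2 * r ^ 6"
    using zero_le_power[of r 6] assms by linarith
  then show ?thesis
    using assms by (simp add: LJ_V_eq divide_simps)
qed

lemma LJ_V_ge:
  assumes "0 < s" and "s \<le> r"
  shows "- 2 / s ^ 3 \<le> LJ_V r"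
proof -
  have "0 < r"
    using assms by linarith
  have "2 / r ^ 3 \<le> 2 / s ^ 3"
    using assms by (intro divide_left_mono power_mono mult_pos_pos) auto
  moreover have "0 \<le> 1 / r ^ 6"
    using \<open>0 < r\<close> by simp
  ultimately show ?thesis
    unfolding LJ_V_eq[OF \<open>0 < r\<close>] by linarith
qed

lemma abs_LJ_V_le:
  assumes "0 < c" and "1 \<le> q" and "c * q \<le> r"
  shows "\<bar>LJ_V r\<bar> \<le> (1 / c ^ 6 + 2 / c ^ 3) * (1 / q ^ 3)"
proof -
  have cq: "0 < c * q"
    using assms by simp
  have "0 < r"
    using cq assms(3) by linarith
  have "1 / r ^ 6 \<le> 1 / (c * q) ^ 6" and "1 / r ^ 3 \<le> 1 / (c * q) ^ 3"
    using assms cq \<open>0 < r\<close> by (intro divide_left_mono power_mono mult_pos_pos; simp)+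
  moreover have "1 / (c * q) ^ 6 \<le> 1 / (c ^ 6 * q ^ 3)"
    using assms by (intro divide_left_mono) (auto simp: power_mult_distrib power_increasing)
  moreover have "(1 / c ^ 6 + 2 / c ^ 3) * (1 / q ^ 3) = 1 / (c ^ 6 * q ^ 3) + 2 * (1 / (c * q) ^ 3)"
    using assms by (simp add: field_simps power_mult_distrib)
  moreover have "0 \<le> 1 / r ^ 6" "0 \<le> 1 / r ^ 3"
    using \<open>0 < r\<close> by simp_all
  ultimately show ?thesis
    unfolding LJ_V_eq[OF \<open>0 < r\<close>] abs_le_iff by linarith
qed

definition rect_form :: "real \<Rightarrow> int \<times> int \<Rightarrow> real" where
  "rect_form y = (\<lambda>(m, n). of_int m ^ 2 / y + y * of_int n ^ 2)"

lemma E_lat_zero_shear: "E_lat f 0 y A = infsum (\<lambda>z. f (A * rect_form y z)) (UNIV - {(0, 0)})"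
  by (simp add: E_lat_def rect_form_def case_prod_unfold)

lemma rect_form_ge:
  assumes "1 \<le> y"
  shows "lattice_sq_norm z / y \<le> rect_form y z"
proof -
  obtain m n where z: "z = (m, n)" by (cases z)
  have "of_int n ^ 2 \<le> y * y * of_int n ^ 2"
    using assms mult_mono[of 1 y 1 y] mult_right_mono[of 1 "y * y" "of_int n ^ 2"] by simp
  then show ?thesis
    using assms by (simp add: z lattice_sq_norm_def rect_form_def field_simps)
qed

lemma scaled_rect_form_ge:
  assumes "1 \<le> y" and "0 < A"
  shows "A / y * lattice_sq_norm z \<le> A * rect_form y z"
  using mult_left_mono[OF rect_form_ge[OF assms(1)], of A z] assms(2) by simp

lemma has_sum_E_lat_LJ_V:
  assumes "1 \<le> y" and "0 < A"
  shows "((\<lambda>z. LJ_V (A * rect_form y z)) has_sum E_lat LJ_V 0 y A) (UNIV - {(0, 0)})"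
proof -
  define K where "K = 1 / (A / y) ^ 6 + 2 / (A / y) ^ 3"
  have "(\<lambda>z. K * (1 / lattice_sq_norm z ^ 3)) summable_on UNIV - {(0, 0)}"
    by (intro summable_on_cmult_right summable_on_inverse_lattice_sq_norm_power) simp
  then have "(\<lambda>z. norm (K * (1 / lattice_sq_norm z ^ 3))) summable_on UNIV - {(0, 0)}"
    by (rule iffD1[OF summable_on_iff_abs_summable_on_real])
  then have "(\<lambda>z. norm (LJ_V (A * rect_form y z))) summable_on UNIV - {(0, 0)}"
  proof (rule Infinite_Sum.abs_summable_on_comparison_test)
    fix z :: "int \<times> int" assume "z \<in> UNIV - {(0, 0)}"
    then have q: "1 \<le> lattice_sq_norm z"
      by (simp add: lattice_sq_norm_ge_1)
    have "\<bar>LJ_V (A * rect_form y z)\<bar> \<le> K * (1 / lattice_sq_norm z ^ 3)"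
      unfolding K_def using assms q scaled_rect_form_ge[OF assms]
      by (intro abs_LJ_V_le) auto
    moreover have "0 \<le> K"
      using assms by (simp add: K_def)
    ultimately show "norm (LJ_V (A * rect_form y z)) \<le> norm (K * (1 / lattice_sq_norm z ^ 3))"
      using q by simp
  qed
  then have "(\<lambda>z. LJ_V (A * rect_form y z)) summable_on UNIV - {(0, 0)}"
    by (rule iffD2[OF summable_on_iff_abs_summable_on_real])
  then show ?thesis
    by (simp add: E_lat_zero_shear)
qed

lemma E_lat_LJ_V_ge:
  assumes "1 \<le> y" and "0 < A"
  shows "2 * (y / A) ^ 6 - 2 * (y / A) ^ 3 * zeta_Z2 6 \<le> E_lat LJ_V 0 y A"
proof -
  define c where "c = 2 * (y / A) ^ 3"
  define f where "f z = LJ_V (A * rect_form y z) + c * (1 / lattice_sq_norm z ^ 3)" for z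
  have f_unit: "f z = (y / A) ^ 6" if "z \<in> {(1, 0), (-1, 0)}" for z
    using that assms by (auto simp: f_def c_def rect_form_def lattice_sq_norm_def LJ_V_eq power_divide)
  have f_nonneg: "0 \<le> f z" if "z \<in> UNIV - {(0, 0)}" for z
  proof -
    have q: "1 \<le> lattice_sq_norm z"
      using that by (simp add: lattice_sq_norm_ge_1)
    have "- 2 / (A / y * lattice_sq_norm z) ^ 3 \<le> LJ_V (A * rect_form y z)"
      using assms q scaled_rect_form_ge[OF assms] by (intro LJ_V_ge) auto
    then show ?thesis
      by (simp add: f_def c_def power_mult_distrib power_divide)
  qed
  have "sum (\<lambda>_. (y / A) ^ 6) {(1 :: int, 0 :: int), (-1, 0)} = 2 * (y / A) ^ 6"
    by simp
  then have "((\<lambda>_. (y / A) ^ 6) has_sum 2 * (y / A) ^ 6) {(1 :: int, 0 :: int), (-1, 0)}"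
    using has_sum_finite[of "{(1 :: int, 0 :: int), (-1, 0)}" "\<lambda>_. (y / A) ^ 6"] by simp
  moreover have "(f has_sum E_lat LJ_V 0 y A + c * zeta_Z2 6) (UNIV - {(0, 0)})"
    unfolding f_def
    by (intro has_sum_add has_sum_E_lat_LJ_V has_sum_cmult_right has_sum_zeta_Z2_6 assms)
  ultimately have "2 * (y / A) ^ 6 \<le> E_lat LJ_V 0 y A + c * zeta_Z2 6"
    by (rule has_sum_mono_neutral) (use f_unit f_nonneg in auto)
  then show ?thesis
    by (simp add: c_def)
qed

lemma E_lat_LJ_V_self_le:
  assumes "1 \<le> A"
  shows "E_lat LJ_V 0 A A \<le> - 2"
proof -
  have "((\<lambda>z. LJ_V (A * rect_form A z)) has_sum - 2) {(1, 0), (-1, 0)}"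
    using has_sum_finite[of "{(1, 0), (-1, 0)}" "\<lambda>z. LJ_V (A * rect_form A z)"] assms
    by (simp add: rect_form_def LJ_V_eq)
  moreover have "1 \<le> A * rect_form A z" if "z \<in> UNIV - {(0, 0)}" for z
    using that assms scaled_rect_form_ge[of A A z] lattice_sq_norm_ge_1[of z] by simp
  ultimately show ?thesis
    using assms by (intro has_sum_mono_neutral[OF has_sum_E_lat_LJ_V[of A A]]) (auto intro: LJ_V_nonpos)
qed

lemma minimizer_cubic_le_0:
  assumes "1 \<le> A" and "is_minimizer_y A yA"
  shows "(yA ^ 3) ^ 2 - zeta_Z2 6 * A ^ 3 * yA ^ 3 + A ^ 6 \<le> 0"
proof -
  have "1 \<le> yA" and "E_lat LJ_V 0 yA A \<le> E_lat LJ_V 0 A A"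
    using assms by (auto simp: is_minimizer_y_def)
  then have "2 * (yA / A) ^ 6 - 2 * (yA / A) ^ 3 * zeta_Z2 6 \<le> - 2"
    using E_lat_LJ_V_ge[of yA A] E_lat_LJ_V_self_le[OF assms(1)] assms(1) by simp
  then have "((yA / A) ^ 6 - (yA / A) ^ 3 * zeta_Z2 6 + 1) * A ^ 6 \<le> 0"
    using assms(1) by (intro mult_nonpos_nonneg) auto
  moreover have "((yA / A) ^ 6 - (yA / A) ^ 3 * zeta_Z2 6 + 1) * A ^ 6 =
      (yA ^ 3) ^ 2 - zeta_Z2 6 * A ^ 3 * yA ^ 3 + A ^ 6"
    using assms(1) by (simp add: field_simps power_divide flip: power_mult power_add)
  ultimately show ?thesis
    by simp
qed

lemma quadratic_nonpos_between_roots: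
  fixes x b c :: real
  assumes "x ^ 2 - b * x + c \<le> 0"
  shows "(b - sqrt (b ^ 2 - 4 * c)) / 2 \<le> x" and "x \<le> (b + sqrt (b ^ 2 - 4 * c)) / 2"
proof -
  have "(2 * x - b) ^ 2 \<le> b ^ 2 - 4 * c"
    using assms by (simp add: power2_eq_square algebra_simps)
  then have "\<bar>2 * x - b\<bar> \<le> sqrt (b ^ 2 - 4 * c)"
    by (metis real_sqrt_abs real_sqrt_le_mono)
  then show "(b - sqrt (b ^ 2 - 4 * c)) / 2 \<le> x" and "x \<le> (b + sqrt (b ^ 2 - 4 * c)) / 2"
    by (simp_all add: abs_le_iff)
qed

lemma power_le_mult_power_imp_le_root:
  fixes x a c :: real
  assumes "0 < n" and "0 \<le> x" and "0 \<le> a" and "x ^ n \<le> c * a ^ n"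
  shows "x \<le> root n c * a"
proof -
  have "root n (x ^ n) \<le> root n (c * a ^ n)"
    using assms by simp
  then show ?thesis
    using assms by (simp add: real_root_mult real_root_power_cancel)
qed

lemma minimizer_between_X1_X2:
  assumes "2 \<le> A" and "is_minimizer_y A yA"
  shows "root 3 (X1 A) \<le> yA \<and> yA \<le> root 3 (X2 A)"
proof -
  define b where "b = zeta_Z2 6 * A ^ 3"
  define D where "D = 4 * (zeta_Z2 6)\<^sup>2 * A ^ 6 - 32 * A ^ 4 + 8 * zeta_Z2 12 * A ^ 2"
  have "1 \<le> yA"
    using assms(2) by (simp add: is_minimizer_y_def)
  have "(yA ^ 3) ^ 2 - b * yA ^ 3 + A ^ 6 \<le> 0"
    using minimizer_cubic_le_0[of A yA] assms by (simp add: b_def mult.assoc)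
  note roots = quadratic_nonpos_between_roots[OF this]
  have "2 * A ^ 4 \<le> A ^ 2 * A ^ 4"
    using assms(1) power_mono[of 2 A 2] by (intro mult_right_mono) auto
  moreover have "0 \<le> 8 * zeta_Z2 12 * A ^ 2"
    using zeta_Z2_nonneg[of 12] by simp
  moreover have "4 * (zeta_Z2 6)\<^sup>2 * A ^ 6 = 4 * b ^ 2"
    by (simp add: b_def power_mult_distrib flip: power_mult)
  moreover have "A ^ 2 * A ^ 4 = A ^ 6"
    by (simp flip: power_add)
  ultimately have "4 * (b ^ 2 - 4 * A ^ 6) \<le> D"
    unfolding D_def by (simp add: algebra_simps)
  then have "sqrt 4 * sqrt (b ^ 2 - 4 * A ^ 6) \<le> sqrt D"
    by (metis real_sqrt_le_mono real_sqrt_mult)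
  then have "2 * sqrt (b ^ 2 - 4 * A ^ 6) \<le> sqrt D"
    by simp
  then have "X1 A \<le> yA ^ 3" and "yA ^ 3 \<le> X2 A"
    using roots by (simp_all add: X1_def X2_def D_def b_def)
  moreover have "root 3 (yA ^ 3) = yA"
    using \<open>1 \<le> yA\<close> by (simp add: real_root_power_cancel)
  ultimately show ?thesis
    by (metis real_root_le_iff zero_less_numeral)
qed

lemma minimizer_le_linear:
  assumes "1 \<le> A" and "is_minimizer_y A yA"
  shows "yA \<le> root 3 (zeta_Z2 6) * A"
proof (rule power_le_mult_power_imp_le_root)
  have "1 \<le> yA"
    using assms(2) by (simp add: is_minimizer_y_def)
  then show "0 \<le> yA" by simp
  have "(yA ^ 3) ^ 2 \<le> zeta_Z2 6 * A ^ 3 * yA ^ 3 - A ^ 6"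
    using minimizer_cubic_le_0[OF assms] by linarith
  also have "\<dots> \<le> zeta_Z2 6 * A ^ 3 * yA ^ 3"
    by simp
  finally have "yA ^ 3 * yA ^ 3 \<le> (zeta_Z2 6 * A ^ 3) * yA ^ 3"
    by (simp add: power2_eq_square)
  then show "yA ^ 3 \<le> zeta_Z2 6 * A ^ 3"
    by (rule mult_right_le_imp_le) (use \<open>1 \<le> yA\<close> in simp)
qed (use assms in auto)

lemma minimizer_ge_linear:
  assumes "1 \<le> A" and "is_minimizer_y A yA"
  shows "A \<le> root 3 (zeta_Z2 6) * yA"
proof (rule power_le_mult_power_imp_le_root)
  have "1 \<le> yA"
    using assms(2) by (simp add: is_minimizer_y_def)
  then show "0 \<le> yA" by simp
  have "A ^ 6 \<le> zeta_Z2 6 * A ^ 3 * yA ^ 3 - (yA ^ 3) ^ 2"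
    using minimizer_cubic_le_0[OF assms] by linarith
  also have "\<dots> \<le> zeta_Z2 6 * A ^ 3 * yA ^ 3"
    by simp
  finally have "A ^ 3 * A ^ 3 \<le> (zeta_Z2 6 * yA ^ 3) * A ^ 3"
    by (simp add: ac_simps flip: power_add)
  then show "A ^ 3 \<le> zeta_Z2 6 * yA ^ 3"
    by (rule mult_right_le_imp_le) (use assms(1) in simp)
qed (use assms in auto)

theorem proposition5p1:
  shows "\<exists>A3>0.
    (\<forall>A>A3. \<forall>yA. is_minimizer_y A yA \<longrightarrow> root 3 (X1 A) \<le> yA \<and> yA \<le> root 3 (X2 A)) \<and>
    (\<forall>yf :: real \<Rightarrow> real. (\<forall>A>A3. is_minimizer_y A (yf A)) \<longrightarrow> filterlim yf at_top at_top) \<and>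
    (\<exists>C>0. \<forall>A>A3. \<forall>yA. is_minimizer_y A yA \<longrightarrow> yA \<le> C * A)"
proof (rule exI[of _ 2], intro conjI)
  define c where "c = root 3 (zeta_Z2 6)"
  have "0 < c"
    unfolding c_def using zeta_Z2_6_ge_1 by (intro real_root_gt_zero) auto
  show "(0 :: real) < 2"
    by simp
  show "\<forall>A>2. \<forall>yA. is_minimizer_y A yA \<longrightarrow> root 3 (X1 A) \<le> yA \<and> yA \<le> root 3 (X2 A)"
    using minimizer_between_X1_X2 less_imp_le by blast
  show "\<forall>yf :: real \<Rightarrow> real. (\<forall>A>2. is_minimizer_y A (yf A)) \<longrightarrow> filterlim yf at_top at_top"
  proof (intro allI impI)
    fix yf :: "real \<Rightarrow> real"
    assume yf: "\<forall>A>2. is_minimizer_y A (yf A)"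
    have "filterlim (\<lambda>A. inverse c * A) at_top at_top"
      using \<open>0 < c\<close> by (intro filterlim_tendsto_pos_mult_at_top[OF tendsto_const] filterlim_ident) simp
    moreover have "eventually (\<lambda>A. inverse c * A \<le> yf A) at_top"
      using eventually_gt_at_top[of 2]
    proof eventually_elim
      case (elim A)
      then have "A \<le> c * yf A"
        using yf minimizer_ge_linear[of A "yf A"] by (simp add: c_def)
      then show ?case
        using \<open>0 < c\<close> by (simp add: field_simps)
    qed
    ultimately show "filterlim yf at_top at_top"
      by (rule filterlim_at_top_mono)
  qed
  show "\<exists>C>0. \<forall>A>2. \<forall>yA. is_minimizer_y A yA \<longrightarrow> yA \<le> C * A"
    using \<open>0 < c\<close> minimizer_le_linear by (intro exI[of _ c]) (simp add: c_def)
qed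

end
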